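(* Let $H$ be a vertically connected matroid and $Y\subseteq E(H)$. Suppose that $\{A,B\}$ is a vertical $2$-separation of $H$ with $A$ minimal (under inclusion) among sides of vertical $2$-separations of $H$ that contain $Y$. Then $(A-Y)\cap \mathrm{cl}_H(B)=\emptyset$. Moreover, if $x\in (A-Y)\cap \mathrm{cl}^*_H(B)$, then $r_H(A)=2$ and $x$ is a coloop of $H|A$.
   Context: For a matroid $H$ and $A\subseteq E(H)$, $\lambda_H(A)=r_H(A)+r_H(E(H)-A)-r(H)$. A partition $\{A,B\}$ of $E(H)$ is a vertical $k$-separation if $\lambda_H(A)\le k-1$ and $r_H(A),r_H(B)\ge k$. $H$ is vertically connected if it has no vertical $1$-separation, and vertically $3$-connected if it has no vertical $1$- or $2$-separation. $\mathrm{cl}^*_H$ is the closure operator of the dual $H^*$. *)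

theory Defs
  imports Main
begin

text \<open>A (finite) matroid H is given by its ground set E and rank function r,
  satisfying the rank axioms (R1)-(R3). The rank function is only meaningful on
  subsets of E.\<close>
definition matroid :: "'a set \<Rightarrow> ('a set \<Rightarrow> nat) \<Rightarrow> bool" where
  "matroid E r \<longleftrightarrow> finite E
     \<and> (\<forall>X. X \<subseteq> E \<longrightarrow> r X \<le> card X)
     \<and> (\<forall>X Y. X \<subseteq> Y \<and> Y \<subseteq> E \<longrightarrow> r X \<le> r Y)
     \<and> (\<forall>X Y. X \<subseteq> E \<and> Y \<subseteq> E \<longrightarrow> r (X \<union> Y) + r (X \<inter> Y) \<le> r X + r Y)"

definition conn :: "'a set \<Rightarrow> ('a set \<Rightarrow> nat) \<Rightarrow> 'a set \<Rightarrow> int" where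
  "conn E r A = int (r A) + int (r (E - A)) - int (r E)"

definition vert_sep :: "'a set \<Rightarrow> ('a set \<Rightarrow> nat) \<Rightarrow> nat \<Rightarrow> 'a set \<Rightarrow> 'a set \<Rightarrow> bool" where
  "vert_sep E r k A B \<longleftrightarrow> A \<union> B = E \<and> A \<inter> B = {}
     \<and> conn E r A \<le> int k - 1 \<and> r A \<ge> k \<and> r B \<ge> k"

definition vert_connected :: "'a set \<Rightarrow> ('a set \<Rightarrow> nat) \<Rightarrow> bool" where
  "vert_connected E r \<longleftrightarrow> \<not> (\<exists>A B. vert_sep E r 1 A B)"

definition vert_3_connected :: "'a set \<Rightarrow> ('a set \<Rightarrow> nat) \<Rightarrow> bool" where
  "vert_3_connected E r \<longleftrightarrow> \<not> (\<exists>A B. vert_sep E r 1 A B \<or> vert_sep E r 2 A B)"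

definition cl :: "'a set \<Rightarrow> ('a set \<Rightarrow> nat) \<Rightarrow> 'a set \<Rightarrow> 'a set" where
  "cl E r X = {x \<in> E. r (X \<union> {x}) = r X}"

definition dual_rank :: "'a set \<Rightarrow> ('a set \<Rightarrow> nat) \<Rightarrow> 'a set \<Rightarrow> nat" where
  "dual_rank E r X = card X + r (E - X) - r E"

definition cl_dual :: "'a set \<Rightarrow> ('a set \<Rightarrow> nat) \<Rightarrow> 'a set \<Rightarrow> 'a set" where
  "cl_dual E r X = cl E (dual_rank E r) X"

text \<open>x is a coloop of the matroid (E, r): x lies in every basis,
  i.e. deleting x drops the rank. The restriction H|A is the matroid (A, r).\<close>
definition coloop :: "'a set \<Rightarrow> ('a set \<Rightarrow> nat) \<Rightarrow> 'a \<Rightarrow> bool" where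
  "coloop E r x \<longleftrightarrow> x \<in> E \<and> r (E - {x}) < r E"

end

theory Submission
  imports Defs
begin

text \<open>Let \<open>x \<in> A - Y\<close>. If \<open>x \<in> cl(B)\<close>, or if \<open>x\<close> is a coloop of \<open>H|A\<close> (which is what
  \<open>x \<in> cl\<^sup>*(B)\<close> means), then moving \<open>x\<close> from \<open>A\<close> to \<open>B\<close> does not raise the connectivity.
  By minimality of \<open>A\<close>, the smaller side \<open>A - {x}\<close> therefore cannot have rank at least 2,
  so \<open>r(A) = 2\<close> and \<open>r(A - {x}) = 1\<close>. When \<open>x \<in> cl(B)\<close> this even makes
  \<open>{A - {x}, B \<union> {x}}\<close> a vertical 1-separation, contradicting vertical connectivity.\<close>

lemma matroid_rank_le_card: "matroid E r \<Longrightarrow> X \<subseteq> E \<Longrightarrow> r X \<le> card X"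
  unfolding matroid_def by blast

lemma matroid_rank_mono: "matroid E r \<Longrightarrow> X \<subseteq> Z \<Longrightarrow> Z \<subseteq> E \<Longrightarrow> r X \<le> r Z"
  unfolding matroid_def by blast

lemma matroid_rank_submod:
  "matroid E r \<Longrightarrow> X \<subseteq> E \<Longrightarrow> Z \<subseteq> E \<Longrightarrow> r (X \<union> Z) + r (X \<inter> Z) \<le> r X + r Z"
  unfolding matroid_def by blast

lemma matroid_rank_insert_le:
  assumes "matroid E r" "X \<subseteq> E" "x \<in> E"
  shows "r (insert x X) \<le> r X + 1"
proof -
  have "r (X \<union> {x}) + r (X \<inter> {x}) \<le> r X + r {x}"
    using matroid_rank_submod[OF assms(1,2)] assms(3) by blast
  moreover have "r {x} \<le> 1"
    using matroid_rank_le_card[OF assms(1), of "{x}"] assms(3) by simp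
  ultimately show ?thesis by simp
qed

lemma matroid_rank_le_remove_plus_1:
  assumes "matroid E r" "A \<subseteq> E" "x \<in> A"
  shows "r A \<le> r (A - {x}) + 1"
  using matroid_rank_insert_le[OF assms(1), of "A - {x}" x] assms(2,3)
  by (simp add: insert_absorb subset_iff)

lemma matroid_rank_le_card_plus_compl:
  assumes "matroid E r" "Z \<subseteq> E"
  shows "r E \<le> card Z + r (E - Z)"
proof -
  have "Z \<union> (E - Z) = E" using assms(2) by blast
  then have "r E \<le> r Z + r (E - Z)"
    using matroid_rank_submod[OF assms(1,2), of "E - Z"] by simp
  then show ?thesis using matroid_rank_le_card[OF assms] by linarith
qed

lemma in_cl_dual_iff_coloop_compl:
  assumes "matroid E r" "X \<subseteq> E" "x \<in> E - X"
  shows "x \<in> cl_dual E r X \<longleftrightarrow> coloop (E - X) r x"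
proof -
  have "finite E" using assms(1) unfolding matroid_def by blast
  then have "finite X" using assms(2) by (rule finite_subset[rotated])
  then have card_ins: "card (insert x X) = card X + 1" using assms(3) by simp
  have compl: "E - insert x X = E - X - {x}" by blast
  \<comment> \<open>The two bounds show that the truncated subtractions in \<open>dual_rank\<close> are exact.\<close>
  have bound0: "r E \<le> card X + r (E - X)"
    using matroid_rank_le_card_plus_compl[OF assms(1,2)] .
  have bound1: "r E \<le> card X + 1 + r (E - X - {x})"
    using matroid_rank_le_card_plus_compl[OF assms(1), of "insert x X"] assms card_ins compl
    by simp
  have "r (E - X - {x}) \<le> r (E - X)" "r (E - X) \<le> r (E - X - {x}) + 1"
    using matroid_rank_mono[OF assms(1)] matroid_rank_le_remove_plus_1[OF assms(1)] assms(3)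
    by auto
  then have "card X + 1 + r (E - X - {x}) - r E = card X + r (E - X) - r E
      \<longleftrightarrow> r (E - X - {x}) < r (E - X)"
    using bound0 bound1 by linarith
  then show ?thesis
    using assms(3) unfolding cl_dual_def cl_def dual_rank_def coloop_def
    by (simp add: card_ins compl)
qed

lemma conn_remove_cl_le:
  assumes "matroid E r" "A \<subseteq> E" "x \<in> A" "x \<in> cl E r (E - A)"
  shows "conn E r (A - {x}) \<le> conn E r A"
proof -
  have "r (A - {x}) \<le> r A" using matroid_rank_mono[OF assms(1) _ assms(2)] by blast
  moreover have "E - (A - {x}) = (E - A) \<union> {x}" using assms(2,3) by blast
  ultimately show ?thesis using assms(4) unfolding conn_def cl_def by simp
qed

lemma conn_remove_coloop_le:
  assumes "matroid E r" "A \<subseteq> E" "coloop A r x"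
  shows "conn E r (A - {x}) \<le> conn E r A"
proof -
  have "x \<in> A" and drop: "r (A - {x}) < r A" using assms(3) unfolding coloop_def by auto
  have "E - (A - {x}) = insert x (E - A)" using assms(2) \<open>x \<in> A\<close> by blast
  moreover have "r (insert x (E - A)) \<le> r (E - A) + 1"
    using matroid_rank_insert_le[OF assms(1)] assms(2) \<open>x \<in> A\<close> by blast
  ultimately show ?thesis using drop unfolding conn_def by simp
qed

lemma vert_sep_move:
  assumes "matroid E r" "vert_sep E r k A B" "x \<in> A"
    and "conn E r (A - {x}) \<le> int j - 1" "j \<le> r (A - {x})" "j \<le> k"
  shows "vert_sep E r j (A - {x}) (insert x B)"
proof -
  have part: "A \<union> B = E" "A \<inter> B = {}" and "k \<le> r B"
    using assms(2) unfolding vert_sep_def by auto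
  have "r B \<le> r (insert x B)"
    using matroid_rank_mono[OF assms(1), of B "insert x B"] part assms(3) by blast
  moreover have "(A - {x}) \<union> insert x B = E" "(A - {x}) \<inter> insert x B = {}"
    using part assms(3) by blast+
  ultimately show ?thesis
    using assms(4-6) \<open>k \<le> r B\<close> unfolding vert_sep_def by linarith
qed

lemma minimal_vert_sep_remove_rank_le_1:
  assumes "matroid E r" "vert_sep E r 2 A B" "x \<in> A - Y"
    and minimal: "\<And>A' B'. vert_sep E r 2 A' B' \<Longrightarrow> Y \<subseteq> A' \<Longrightarrow> A' \<subseteq> A \<Longrightarrow> A' = A"
    and "Y \<subseteq> A"
    and "conn E r (A - {x}) \<le> conn E r A"
  shows "r (A - {x}) \<le> 1"
proof (rule ccontr)
  assume "\<not> r (A - {x}) \<le> 1"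
  moreover have "conn E r A \<le> 1" using assms(2) unfolding vert_sep_def by simp
  ultimately have "vert_sep E r 2 (A - {x}) (insert x B)"
    using vert_sep_move[OF assms(1,2)] assms(3,6) by simp
  then show False using minimal[of "A - {x}"] assms(3,5) by blast
qed

lemma minimal_vert_sep_disjoint_cl:
  assumes "matroid E r" "vert_connected E r" "vert_sep E r 2 A B" "x \<in> A - Y"
    and "\<And>A' B'. vert_sep E r 2 A' B' \<Longrightarrow> Y \<subseteq> A' \<Longrightarrow> A' \<subseteq> A \<Longrightarrow> A' = A"
    and "Y \<subseteq> A"
  shows "x \<notin> cl E r B"
proof
  assume x_cl: "x \<in> cl E r B"
  have AE: "A \<subseteq> E" and BA: "B = E - A" and "2 \<le> r A" and "conn E r A \<le> 1"
    using assms(3) unfolding vert_sep_def by auto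
  have "r (A - {x}) \<le> 1"
    using minimal_vert_sep_remove_rank_le_1[OF assms(1,3,4)] assms(5,6)
      conn_remove_cl_le[OF assms(1) AE] assms(4) x_cl BA by blast
  moreover have "r A \<le> r (A - {x}) + 1"
    using matroid_rank_le_remove_plus_1[OF assms(1) AE] assms(4) by blast
  ultimately have "r (A - {x}) = 1" "r A = 2" using \<open>2 \<le> r A\<close> by linarith+
  moreover have "E - (A - {x}) = insert x (E - A)" using AE assms(4) by blast
  ultimately have "conn E r (A - {x}) = conn E r A - 1"
    using x_cl BA unfolding conn_def cl_def by simp
  then have "vert_sep E r 1 (A - {x}) (insert x B)"
    using vert_sep_move[OF assms(1,3)] assms(4) \<open>conn E r A \<le> 1\<close> \<open>r (A - {x}) = 1\<close>
    by simp
  then show False using assms(2) unfolding vert_connected_def by blast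
qed

lemma minimal_vert_sep_cl_dual_coloop:
  assumes "matroid E r" "vert_sep E r 2 A B" "x \<in> A - Y" "x \<in> cl_dual E r B"
    and "\<And>A' B'. vert_sep E r 2 A' B' \<Longrightarrow> Y \<subseteq> A' \<Longrightarrow> A' \<subseteq> A \<Longrightarrow> A' = A"
    and "Y \<subseteq> A"
  shows "r A = 2 \<and> coloop A r x"
proof -
  have AE: "A \<subseteq> E" and BA: "B = E - A" and "2 \<le> r A"
    using assms(2) unfolding vert_sep_def by auto
  then have "E - B = A" by blast
  then have coloop: "coloop A r x"
    using in_cl_dual_iff_coloop_compl[OF assms(1), of B x] assms(3,4) BA by auto
  have "r (A - {x}) \<le> 1"
    using minimal_vert_sep_remove_rank_le_1[OF assms(1,2,3)] assms(5,6)
      conn_remove_coloop_le[OF assms(1) AE coloop] by blast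
  then show ?thesis
    using matroid_rank_le_remove_plus_1[OF assms(1) AE] coloop \<open>2 \<le> r A\<close>
    unfolding coloop_def by fastforce
qed

theorem lemma3p2:
  fixes E :: "'a set" and r :: "'a set \<Rightarrow> nat" and Y A B :: "'a set"
  assumes "matroid E r"
    and "vert_connected E r"
    and "Y \<subseteq> E"
    and "vert_sep E r 2 A B"
    and "Y \<subseteq> A"
    and "\<And>A' B'. vert_sep E r 2 A' B' \<Longrightarrow> Y \<subseteq> A' \<Longrightarrow> A' \<subseteq> A \<Longrightarrow> A' = A"
  shows "(A - Y) \<inter> cl E r B = {}
    \<and> (\<forall>x \<in> (A - Y) \<inter> cl_dual E r B. r A = 2 \<and> coloop A r x)"
  using minimal_vert_sep_disjoint_cl[OF assms(1,2,4)]
    minimal_vert_sep_cl_dual_coloop[OF assms(1,4)] assms(5,6)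
  by blast

end
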